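(* For all positive real numbers $a,b,c$ and every integer $n\ge 1$, $$\sum_{k=1}^{n}\binom{n}{k}(ab+c)^{n-k}(ab+2c)^{k}\,a^{\xi(k)}\,(ab)^{\lfloor k/2\rfloor}\,c^{\,n-k}\,F_k^{(a,b,c)}=F_{4n}^{(a,b,c)}.$$
   Context: For positive real numbers $a,b,c$, the generalized Fibonacci numbers $F_m^{(a,b,c)}$ are defined by $F_0^{(a,b,c)}=0$, $F_1^{(a,b,c)}=1$, and for $m\ge 2$: $F_m^{(a,b,c)}=a\,F_{m-1}^{(a,b,c)}+c\,F_{m-2}^{(a,b,c)}$ if $m$ is even, and $F_m^{(a,b,c)}=b\,F_{m-1}^{(a,b,c)}+c\,F_{m-2}^{(a,b,c)}$ if $m$ is odd. For an integer $k$, $\lfloor k/2\rfloor$ denotes the floor of $k/2$ and $\xi(k):=k-2\lfloor k/2\rfloor$. *)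

theory Defs
  imports Complex_Main
begin

fun gfib :: "real \<Rightarrow> real \<Rightarrow> real \<Rightarrow> nat \<Rightarrow> real" where
  "gfib a b c 0 = 0"
| "gfib a b c (Suc 0) = 1"
| "gfib a b c (Suc (Suc m)) =
     (if even (Suc (Suc m)) then a else b) * gfib a b c (Suc m) + c * gfib a b c m"

definition xi :: "int \<Rightarrow> int" where
  "xi k = k - 2 * \<lfloor>real_of_int k / 2\<rfloor>"

end

(* Rescaling by the parity factor, G k = a^xi(k) (ab)^(k div 2) F_k, removes the alternation
   between a and b: G satisfies G (k+2) = ab G (k+1) + abc G k.  Unrolling this four times
   gives G (k+4) = (ab)^2 ((ab+2c) G (k+1) + c(ab+c) G k), i.e. the shift operator E obeys
   E^4 = \<alpha> E + \<beta>.  Expanding E^(4n) = (\<alpha> E + \<beta>)^n binomially and evaluating at G 0 = 0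
   gives the identity after cancelling (ab)^(2n). *)
theory Submission
  imports Defs
begin

lemma xi_of_nat: "xi (int k) = int (k mod 2)"
proof -
  have "\<lfloor>real_of_int (int k) / 2\<rfloor> = int (k div 2)" by linarith
  then show ?thesis
    unfolding xi_def by (simp add: zdiv_int minus_mult_div_eq_mod zmod_int)
qed

lemma binomial_sum_Suc:
  fixes \<alpha> \<beta> :: "'a::comm_semiring_1" and g :: "nat \<Rightarrow> 'a"
  shows "(\<Sum>k\<le>Suc n. of_nat (Suc n choose k) * \<alpha>^k * \<beta>^(Suc n - k) * g k)
       = (\<Sum>k\<le>n. of_nat (n choose k) * \<alpha>^k * \<beta>^(n - k) * (\<alpha> * g (Suc k) + \<beta> * g k))"
proof -
  define h where "h k = of_nat (n choose k) * \<alpha>^k * \<beta>^(Suc n - k) * g k" for k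
  have shifted: "(\<Sum>k\<le>n. h (Suc k)) + h 0 = (\<Sum>k\<le>n. h k)"
  proof -
    have "(\<Sum>k\<le>n. h (Suc k)) + h 0 = (\<Sum>k\<le>Suc n. h k)"
      by (subst sum.atMost_Suc_shift) (simp add: add.commute)
    also have "\<dots> = (\<Sum>k\<le>n. h k)" by (simp add: h_def binomial_eq_0)
    finally show ?thesis .
  qed
  have "(\<Sum>k\<le>Suc n. of_nat (Suc n choose k) * \<alpha>^k * \<beta>^(Suc n - k) * g k)
      = (\<Sum>k\<le>n. of_nat (n choose k) * \<alpha>^Suc k * \<beta>^(n - k) * g (Suc k)) + (\<Sum>k\<le>n. h (Suc k)) + h 0"
    by (subst sum.atMost_Suc_shift) (simp add: h_def sum.distrib[symmetric] algebra_simps)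
  also have "\<dots> = (\<Sum>k\<le>n. of_nat (n choose k) * \<alpha>^Suc k * \<beta>^(n - k) * g (Suc k)) + (\<Sum>k\<le>n. h k)"
    by (simp add: shifted add.assoc)
  also have "\<dots> = (\<Sum>k\<le>n. of_nat (n choose k) * \<alpha>^k * \<beta>^(n - k) * (\<alpha> * g (Suc k) + \<beta> * g k))"
    unfolding h_def sum.distrib[symmetric]
    by (rule sum.cong) (auto simp: algebra_simps Suc_diff_le)
  finally show ?thesis .
qed

lemma binomial_shift_recurrence:
  fixes x :: "nat \<Rightarrow> 'a::comm_semiring_1"
  assumes step: "\<And>m. x (m + s) = \<alpha> * x (Suc m) + \<beta> * x m"
  shows "x (m + s * n) = (\<Sum>k\<le>n. of_nat (n choose k) * \<alpha>^k * \<beta>^(n - k) * x (m + k))"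
proof (induction n arbitrary: m)
  case 0
  show ?case by simp
next
  case (Suc n)
  have "x (m + s * Suc n) = \<alpha> * x (Suc m + s * n) + \<beta> * x (m + s * n)"
    using step[of "m + s * n"] by (simp add: algebra_simps)
  also have "\<dots> = (\<Sum>k\<le>n. of_nat (n choose k) * \<alpha>^k * \<beta>^(n - k)
                        * (\<alpha> * x (m + Suc k) + \<beta> * x (m + k)))"
    unfolding Suc.IH by (simp add: sum_distrib_left sum.distrib[symmetric] algebra_simps)
  also have "\<dots> = (\<Sum>k\<le>Suc n. of_nat (Suc n choose k) * \<alpha>^k * \<beta>^(Suc n - k) * x (m + k))"
    using binomial_sum_Suc[of n \<alpha> \<beta> "\<lambda>k. x (m + k)"] by simp
  finally show ?case .
qed

lemma second_order_recurrence_step4: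
  fixes x :: "nat \<Rightarrow> 'a::comm_semiring_1"
  assumes "\<And>k. x (Suc (Suc k)) = p * x (Suc k) + q * x k"
  shows "x (k + 4) = p * (p^2 + 2 * q) * x (Suc k) + q * (p^2 + q) * x k"
  by (simp add: assms eval_nat_numeral algebra_simps mult_2)

lemma power_mult_binomial_weights:
  fixes w u v :: "'a::comm_monoid_mult"
  assumes "k \<le> n"
  shows "(w * u)^k * (w * v)^(n - k) = w^n * (u^k * v^(n - k))"
proof -
  have "(w * u)^k * (w * v)^(n - k) = w^(k + (n - k)) * (u^k * v^(n - k))"
    by (simp add: power_mult_distrib power_add mult_ac)
  then show ?thesis using assms by simp
qed

definition scaled_gfib :: "real \<Rightarrow> real \<Rightarrow> real \<Rightarrow> nat \<Rightarrow> real" where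
  "scaled_gfib a b c k = (if even k then 1 else a) * (a*b)^(k div 2) * gfib a b c k"

lemma scaled_gfib_Suc_Suc:
  "scaled_gfib a b c (Suc (Suc k)) = a*b * scaled_gfib a b c (Suc k) + a*b*c * scaled_gfib a b c k"
proof (cases "even k")
  case True
  then obtain j where "k = 2*j" by auto
  then show ?thesis unfolding scaled_gfib_def by (simp add: algebra_simps)
next
  case False
  then obtain j where "k = 2*j + 1" using oddE by blast
  then show ?thesis unfolding scaled_gfib_def by (simp add: algebra_simps)
qed

lemma scaled_gfib_mult_4:
  "scaled_gfib a b c (4*n) = (a*b)^(2*n) * (\<Sum>k\<le>n. real (n choose k) * (c*(a*b + c))^(n - k)
                                                   * (a*b + 2*c)^k * scaled_gfib a b c k)"
proof -
  let ?w = "(a*b)^2"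
  have "scaled_gfib a b c (m + 4) = ?w * (a*b + 2*c) * scaled_gfib a b c (Suc m)
                                  + ?w * (c*(a*b + c)) * scaled_gfib a b c m" for m
    using second_order_recurrence_step4[where x = "scaled_gfib a b c" and p = "a*b" and q = "a*b*c",
                                        OF scaled_gfib_Suc_Suc]
    by (simp add: algebra_simps power2_eq_square)
  from binomial_shift_recurrence[of "scaled_gfib a b c", OF this, of 0 n]
  have "scaled_gfib a b c (4*n) = (\<Sum>k\<le>n. real (n choose k)
           * ((?w * (a*b + 2*c))^k * (?w * (c*(a*b + c)))^(n - k)) * scaled_gfib a b c k)"
    by (simp add: mult_ac)
  also have "\<dots> = ?w^n * (\<Sum>k\<le>n. real (n choose k) * (c*(a*b + c))^(n - k)
                                   * (a*b + 2*c)^k * scaled_gfib a b c k)"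
    unfolding sum_distrib_left
  proof (rule sum.cong)
    fix k
    assume "k \<in> {..n}"
    then have "(?w * (a*b + 2*c))^k * (?w * (c*(a*b + c)))^(n - k)
             = ?w^n * ((a*b + 2*c)^k * (c*(a*b + c))^(n - k))"
      by (simp add: power_mult_binomial_weights)
    then show "real (n choose k) * ((?w * (a*b + 2*c))^k * (?w * (c*(a*b + c)))^(n - k))
                 * scaled_gfib a b c k
             = ?w^n * (real (n choose k) * (c*(a*b + c))^(n - k) * (a*b + 2*c)^k
                 * scaled_gfib a b c k)"
      by (simp only: mult_ac)
  qed simp
  finally show ?thesis by (simp add: power_mult)
qed

theorem lemma1:
  fixes a b c :: real and n :: nat
  assumes "a > 0" and "b > 0" and "c > 0" and "n \<ge> 1"
  shows "(\<Sum>k=1..n. real (n choose k) * (a*b + c) ^ (n - k) * (a*b + 2*c) ^ k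
            * a ^ nat (xi (int k)) * (a*b) ^ nat \<lfloor>real k / 2\<rfloor> * c ^ (n - k)
            * gfib a b c k) = gfib a b c (4*n)"
    (is "(\<Sum>k=1..n. ?t k) = _")
proof -
  have t: "?t k = real (n choose k) * (c*(a*b + c))^(n - k) * (a*b + 2*c)^k * scaled_gfib a b c k"
    for k
  proof -
    have "nat \<lfloor>real k / 2\<rfloor> = k div 2" by linarith
    then show ?thesis
      by (simp add: xi_of_nat mod_2_eq_odd scaled_gfib_def power_mult_distrib ac_simps)
  qed
  have "(a*b)^(2*n) * gfib a b c (4*n) = scaled_gfib a b c (4*n)"
    by (simp add: scaled_gfib_def)
  also have "\<dots> = (a*b)^(2*n) * (\<Sum>k\<le>n. ?t k)"
    by (simp add: scaled_gfib_mult_4 t)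
  also have "(\<Sum>k\<le>n. ?t k) = (\<Sum>k=1..n. ?t k)"
    by (simp add: atMost_atLeast0 sum.atLeast_Suc_atMost)
  finally show ?thesis using assms by simp
qed

end
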